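(* Let $H$ be an $r$-uniform hypergraph on $n$ vertices with average degree $d$. Let $s(H)$ be defined by $$\mathrm{bw}(H)=\frac{nd}{r}\left(1-2^{1-r}\right)-s(H).$$ Then $\mathrm{disc}^{+}(H)\geq \frac{s(H)}{2}$.
   Context: An equipartition of a finite set is a partition into two parts whose sizes differ by at most one. A bisection of $H$ is an equipartition $V(H)=X\cup Y$ together with all edges containing at least one vertex in each part; its size is the number of such edges, and $\mathrm{bw}(H)$ is the minimum size of a bisection. The average degree is $d=r|E(H)|/n$. With edge density $p=|E(H)|/\binom{n}{r}$, for $U\subset V(H)$ let $e(U)$ be the number of edges contained in $U$ and $\mathrm{disc}(U)=e(U)-p\binom{|U|}{r}$; the positive discrepancy is $\mathrm{disc}^{+}(H)=\max_{U\subset V(H)}\mathrm{disc}(U)$. *)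

theory Defs
  imports Complex_Main
begin

definition uniform_hypergraph :: "nat \<Rightarrow> 'a set \<Rightarrow> 'a set set \<Rightarrow> bool" where
  "uniform_hypergraph r V E \<longleftrightarrow> finite V \<and> (\<forall>e\<in>E. e \<subseteq> V \<and> card e = r)"

definition equipartition :: "'a set \<Rightarrow> 'a set \<Rightarrow> 'a set \<Rightarrow> bool" where
  "equipartition V X Y \<longleftrightarrow> X \<union> Y = V \<and> X \<inter> Y = {} \<and>
     \<bar>int (card X) - int (card Y)\<bar> \<le> 1"

definition bisection_size :: "'a set set \<Rightarrow> 'a set \<Rightarrow> 'a set \<Rightarrow> nat" where
  "bisection_size E X Y = card {e\<in>E. e \<inter> X \<noteq> {} \<and> e \<inter> Y \<noteq> {}}"

definition bw :: "'a set \<Rightarrow> 'a set set \<Rightarrow> nat" where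
  "bw V E = Min {bisection_size E X Y | X Y. equipartition V X Y}"

definition avg_degree :: "nat \<Rightarrow> 'a set \<Rightarrow> 'a set set \<Rightarrow> real" where
  "avg_degree r V E = real r * real (card E) / real (card V)"

definition edge_density :: "nat \<Rightarrow> 'a set \<Rightarrow> 'a set set \<Rightarrow> real" where
  "edge_density r V E = real (card E) / real (card V choose r)"

definition edges_in :: "'a set set \<Rightarrow> 'a set \<Rightarrow> nat" where
  "edges_in E U = card {e\<in>E. e \<subseteq> U}"

definition disc :: "nat \<Rightarrow> 'a set \<Rightarrow> 'a set set \<Rightarrow> 'a set \<Rightarrow> real" where
  "disc r V E U = real (edges_in E U) - edge_density r V E * real (card U choose r)"

definition disc_plus :: "nat \<Rightarrow> 'a set \<Rightarrow> 'a set set \<Rightarrow> real" where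
  "disc_plus r V E = Max {disc r V E U | U. U \<subseteq> V}"

definition s_param :: "nat \<Rightarrow> 'a set \<Rightarrow> 'a set set \<Rightarrow> real" where
  "s_param r V E = real (card V) * avg_degree r V E / real r * (1 - 2 powr (1 - real r))
     - real (bw V E)"

end

theory Submission
  imports Defs
begin

text \<open>
  Take a minimum bisection X, Y. Every edge either crosses it or lies inside X or inside Y, so
  e(X) + e(Y) \<ge> |E| - bw(H). Since X and Y have about n/2 vertices each,
  C(|X|, r) + C(|Y|, r) \<le> 2^(1-r) C(n, r), hence the expected number of edges inside the two
  parts is at most 2^(1-r) |E|. So disc(X) + disc(Y) \<ge> |E| (1 - 2^(1-r)) - bw(H) = s(H),
  and one of the two parts has discrepancy at least s(H)/2.
\<close>

text \<open>Each step of the induction multiplies the ratio C(k, r) / C(n, r) by (k - r) / (n - r),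
  which is at most 1/2 because 2 k \<le> n + 1 and r \<ge> 1.\<close>
lemma binomial_half_le:
  fixes n k r :: nat
  assumes "2 * k \<le> n + 1" and "1 \<le> r"
  shows "n * 2^r * (k choose r) \<le> 2 * k * (n choose r)"
  using assms(2)
proof (induction r rule: dec_induct)
  case base
  then show ?case by simp
next
  case (step r)
  have absorb: "Suc r * (m choose Suc r) = (m - r) * (m choose r)" for m :: nat
    by (metis binomial_absorption binomial_absorb_comp)
  have "Suc r * (n * 2^Suc r * (k choose Suc r)) = (2 * (k - r)) * (n * 2^r * (k choose r))"
  proof -
    have "Suc r * (n * 2^Suc r * (k choose Suc r)) = 2 * n * 2^r * (Suc r * (k choose Suc r))"
      by (simp add: algebra_simps)
    then show ?thesis by (simp only: absorb) (simp add: algebra_simps)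
  qed
  also have "\<dots> \<le> (n - r) * (2 * k * (n choose r))"
    using step.IH step.hyps(1) assms(1) by (intro mult_mono[of "2 * (k - r)" "n - r"]) auto
  also have "\<dots> = 2 * k * (Suc r * (n choose Suc r))"
    by (simp only: absorb ac_simps)
  also have "\<dots> = Suc r * (2 * k * (n choose Suc r))"
    by (rule mult.left_commute)
  finally show ?case by (simp only: mult_le_cancel1)
qed

lemma balanced_choose_add_le:
  fixes a b r :: nat
  assumes "\<bar>int a - int b\<bar> \<le> 1" and "1 \<le> r"
  shows "((a choose r) + (b choose r)) * 2^r \<le> 2 * ((a + b) choose r)"
proof (cases "a + b = 0")
  case True
  then show ?thesis using assms(2) by (cases r) auto
next
  case False
  have "(a + b) * 2^r * (a choose r) \<le> 2 * a * ((a + b) choose r)"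
    and "(a + b) * 2^r * (b choose r) \<le> 2 * b * ((a + b) choose r)"
    using assms by (intro binomial_half_le; simp)+
  then have "(a + b) * (((a choose r) + (b choose r)) * 2^r) \<le> (a + b) * (2 * ((a + b) choose r))"
    by (simp add: algebra_simps)
  then show ?thesis using False by (simp only: mult_le_cancel1)
qed

lemma uniform_hypergraph_finite_edges:
  assumes "uniform_hypergraph r V E"
  shows "finite E"
proof -
  have "E \<subseteq> Pow V" using assms by (auto simp: uniform_hypergraph_def)
  then show ?thesis using assms finite_subset by (auto simp: uniform_hypergraph_def)
qed

lemma equipartition_card_add:
  assumes "finite V" and "equipartition V X Y"
  shows "card X + card Y = card V"
  using assms card_Un_disjoint[of X Y] finite_subset[of _ V]
  by (auto simp: equipartition_def)

lemma equipartition_exists: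
  assumes "finite V"
  shows "\<exists>X Y. equipartition V X Y"
proof -
  obtain X where X: "X \<subseteq> V" "card X = card V div 2"
    using obtain_subset_with_card_n[of "card V div 2" V] by auto
  then have "card (V - X) = card V - card V div 2"
    using assms by (simp add: card_Diff_subset finite_subset)
  then have "equipartition V X (V - X)"
    using X by (auto simp: equipartition_def)
  then show ?thesis by blast
qed

lemma bw_attained:
  assumes "finite V"
  obtains X Y where "equipartition V X Y" and "bw V E = bisection_size E X Y"
proof -
  let ?P = "{(X, Y). equipartition V X Y}"
  have "?P \<subseteq> Pow V \<times> Pow V" by (auto simp: equipartition_def)
  then have "finite ?P" using assms by (simp add: finite_subset)
  moreover have "{bisection_size E X Y | X Y. equipartition V X Y} = (\<lambda>(X, Y). bisection_size E X Y) ` ?P"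
    by auto
  moreover have "?P \<noteq> {}" using equipartition_exists[OF assms] by auto
  ultimately have "bw V E \<in> (\<lambda>(X, Y). bisection_size E X Y) ` ?P"
    unfolding bw_def by (metis (no_types, lifting) Min_in finite_imageI image_is_empty)
  then show ?thesis using that by auto
qed

lemma card_le_bisection_size_add_edges_in:
  assumes "finite E" and "\<forall>e\<in>E. e \<subseteq> X \<union> Y"
  shows "card E \<le> bisection_size E X Y + edges_in E X + edges_in E Y"
proof -
  let ?C = "{e\<in>E. e \<inter> X \<noteq> {} \<and> e \<inter> Y \<noteq> {}}"
  have "card E \<le> card (?C \<union> {e\<in>E. e \<subseteq> X} \<union> {e\<in>E. e \<subseteq> Y})"
    using assms by (intro card_mono) auto
  also have "\<dots> \<le> card (?C \<union> {e\<in>E. e \<subseteq> X}) + card {e\<in>E. e \<subseteq> Y}"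
    by (rule card_Un_le)
  also have "\<dots> \<le> card ?C + card {e\<in>E. e \<subseteq> X} + card {e\<in>E. e \<subseteq> Y}"
    using card_Un_le by (rule add_right_mono)
  finally show ?thesis by (simp add: bisection_size_def edges_in_def)
qed

lemma edge_density_balanced_choose_le:
  assumes "finite V" and "equipartition V X Y" and "1 \<le> r"
  shows "edge_density r V E * (real (card X choose r) + real (card Y choose r))
           \<le> real (card E) * 2 powr (1 - real r)"
proof (cases "card V choose r = 0")
  case True
  then have "edge_density r V E = 0" by (simp add: edge_density_def)
  then show ?thesis by simp
next
  case False
  have "\<bar>int (card X) - int (card Y)\<bar> \<le> 1"
    using assms(2) by (simp add: equipartition_def)
  from balanced_choose_add_le[OF this assms(3)]
  have "((card X choose r) + (card Y choose r)) * 2^r \<le> 2 * (card V choose r)"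
    using equipartition_card_add[OF assms(1,2)] by simp
  then have "real (((card X choose r) + (card Y choose r)) * 2^r) \<le> real (2 * (card V choose r))"
    by (simp only: of_nat_le_iff)
  then have "(real (card X choose r) + real (card Y choose r)) / real (card V choose r) \<le> 2 / 2^r"
    using False by (simp add: field_simps)
  then have "real (card E) * ((real (card X choose r) + real (card Y choose r)) / real (card V choose r))
               \<le> real (card E) * (2 / 2^r)"
    by (rule mult_left_mono) simp
  then show ?thesis by (simp add: edge_density_def powr_diff powr_realpow)
qed

lemma disc_add_disc_ge:
  assumes "uniform_hypergraph r V E" and "equipartition V X Y" and "1 \<le> r"
  shows "real (card E) * (1 - 2 powr (1 - real r)) - real (bisection_size E X Y)
           \<le> disc r V E X + disc r V E Y"
proof -
  have "finite V" and "\<forall>e\<in>E. e \<subseteq> X \<union> Y"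
    using assms(1,2) by (auto simp: uniform_hypergraph_def equipartition_def)
  then have "real (card E) \<le> real (bisection_size E X Y) + real (edges_in E X) + real (edges_in E Y)"
    using card_le_bisection_size_add_edges_in uniform_hypergraph_finite_edges[OF assms(1)]
    by (metis of_nat_add of_nat_le_iff)
  moreover have "edge_density r V E * (real (card X choose r) + real (card Y choose r))
                   \<le> real (card E) * 2 powr (1 - real r)"
    using edge_density_balanced_choose_le \<open>finite V\<close> assms(2,3) by blast
  ultimately show ?thesis by (simp add: disc_def algebra_simps)
qed

lemma disc_le_disc_plus:
  assumes "finite V" and "U \<subseteq> V"
  shows "disc r V E U \<le> disc_plus r V E"
proof -
  have "{disc r V E U | U. U \<subseteq> V} = disc r V E ` Pow V" by auto
  then show ?thesis
    unfolding disc_plus_def using assms by (simp add: Max_ge)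
qed

lemma disc_empty:
  assumes "uniform_hypergraph r V E"
  shows "disc r V E {} = 0"
proof -
  have "e = {} \<longleftrightarrow> r = 0" if "e \<in> E" for e
  proof -
    have "finite e" and "card e = r"
      using assms that by (auto simp: uniform_hypergraph_def intro: finite_subset)
    then show ?thesis by auto
  qed
  then have "{e\<in>E. e \<subseteq> {}} = (if r = 0 then E else {})" by auto
  then show ?thesis by (simp add: disc_def edges_in_def edge_density_def)
qed

lemma disc_plus_nonneg:
  assumes "uniform_hypergraph r V E"
  shows "0 \<le> disc_plus r V E"
  using disc_le_disc_plus[of V "{}" r E] disc_empty[OF assms] assms
  by (simp add: uniform_hypergraph_def)

lemma s_param_eq:
  assumes "uniform_hypergraph r V E" and "1 \<le> r"
  shows "s_param r V E = real (card E) * (1 - 2 powr (1 - real r)) - real (bw V E)"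
proof (cases "V = {}")
  case True
  then have "E = {}" using assms by (auto simp: uniform_hypergraph_def)
  then show ?thesis by (simp add: s_param_def avg_degree_def)
next
  case False
  then have "card V \<noteq> 0" using assms(1) by (simp add: uniform_hypergraph_def)
  then show ?thesis using assms(2) by (simp add: s_param_def avg_degree_def)
qed

text \<open>For r = 0 the factor n d / r divides by zero and evaluates to 0, so s(H) = -bw(H).\<close>
lemma s_param_zero_nonpos: "s_param 0 V E \<le> 0"
  by (simp add: s_param_def)

theorem lemma1p4:
  fixes r :: nat and V :: "'a set" and E :: "'a set set"
  assumes "uniform_hypergraph r V E"
  shows "disc_plus r V E \<ge> s_param r V E / 2"
proof (cases "r = 0")
  case True
  then show ?thesis
    using s_param_zero_nonpos[of V E] disc_plus_nonneg[OF assms] by simp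
next
  case False
  have "finite V" using assms by (simp add: uniform_hypergraph_def)
  then obtain X Y where XY: "equipartition V X Y" and bw: "bw V E = bisection_size E X Y"
    by (rule bw_attained)
  have "X \<subseteq> V" and "Y \<subseteq> V" using XY by (auto simp: equipartition_def)
  then have "disc r V E X + disc r V E Y \<le> disc_plus r V E + disc_plus r V E"
    using disc_le_disc_plus[OF \<open>finite V\<close>] by (intro add_mono)
  moreover have "s_param r V E \<le> disc r V E X + disc r V E Y"
    using disc_add_disc_ge[OF assms XY] s_param_eq[OF assms] False bw by simp
  ultimately show ?thesis by simp
qed

end
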